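(* Let $\mathbf{E}\subseteq\mathbf{A}$ be finite symmetric integral relation algebras such that $\mathbf{A}$ is a special extension of $\mathbf{E}$. Let $a,b$ be distinct diversity atoms of $\mathbf{E}$ and let $u,v$ be diversity atoms of $\mathbf{C}_{\mathbf{E}}(\mathbf{A})$. If $u\le J(a,0)$ and $v\le J(b,0)$, then $u;v=J(a;b,0)$. In particular, if $a;b=0'$ then $u;v=0'$.
   Context: Relation algebras are in the sense of Tarski; $1'$ identity, $0'$ its complement, $;$ relative product; integral: $1'$ is an atom; symmetric: $x^{\smile}=x$; a diversity atom is an atom below $0'$. Special extension: $\mathbf{A}$ is a special extension of $\mathbf{E}$ if for all diversity atoms $a,b,c$ of $\mathbf{E}$: (1) if not $a=b=c$ and $a;b\ge c$, then $x;y\ge c$ whenever $x,y$ are atoms of $\mathbf{A}$ with $x\le a$, $y\le b$; (2) if $a;a\ge a$ then $x;y\cdot a\ne0$ whenever $x,y$ are atoms of $\mathbf{A}$ below $a$. The algebra $\mathbf{C}_{\mathbf{E}}(\mathbf{A})$: for each atom $x$ of $\mathbf{A}$ let $c(x)$ be the atom of $\mathbf{E}$ with $x\le c(x)$; $T(i,j,k)$ iff $(i\le j=k)$ or $(j\le k=i)$ or $(k\le i=j)$. Atoms: $1'$ and $x^{(i)}$ for diversity atoms $x$ of $\mathbf{A}$ and $i\in\omega$. $C$ is the set of all permutations of $(1',1',1')$, $(1',x^{(i)},x^{(i)})$, and $(x^{(i)},y^{(j)},z^{(k)})$ with $x;y\ge z$ in $\mathbf{A}$ and ($c(x)=c(y)=c(z)\Rightarrow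 T(i,j,k)$). $\mathbf{C}_{\mathbf{E}}(\mathbf{A})$ is the algebra of all sets of atoms with set Boolean operations, identity $\{1'\}$ (so its diversity element $0'$ is the set of all $x^{(i)}$), converse the identity map, and $X;Y=\{w:\exists u\in X,\exists v\in Y,(u,v,w)\in C\}$. For $a\in\mathbf{A}$, $n\in\omega$, $J(a,n)$ is the join of all $x^{(i)}$ with $x$ a diversity atom of $\mathbf{A}$, $x\le a$, $n\le i$, together with $1'$ if $1'\le a$. *)

theory Defs
  imports Main
begin

record 'a ra =
  ra_carrier :: "'a set"
  ra_join :: "'a \<Rightarrow> 'a \<Rightarrow> 'a"
  ra_meet :: "'a \<Rightarrow> 'a \<Rightarrow> 'a"
  ra_cmpl :: "'a \<Rightarrow> 'a"
  ra_bot :: 'a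
  ra_top :: 'a
  ra_comp :: "'a \<Rightarrow> 'a \<Rightarrow> 'a"
  ra_conv :: "'a \<Rightarrow> 'a"
  ra_ident :: 'a

definition relation_algebra :: "('a, 'b) ra_scheme \<Rightarrow> bool" where
  "relation_algebra R \<longleftrightarrow>
    (let K = ra_carrier R; j = ra_join R; m = ra_meet R; c = ra_cmpl R;
         z = ra_bot R; t = ra_top R; p = ra_comp R; v = ra_conv R; e = ra_ident R in
     z \<in> K \<and> t \<in> K \<and> e \<in> K \<and>
     (\<forall>x\<in>K. \<forall>y\<in>K. j x y \<in> K \<and> m x y \<in> K \<and> p x y \<in> K) \<and>
     (\<forall>x\<in>K. c x \<in> K \<and> v x \<in> K) \<and>
     \<comment> \<open>Boolean algebra axioms\<close>
     (\<forall>x\<in>K. \<forall>y\<in>K. j x y = j y x \<and> m x y = m y x) \<and>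
     (\<forall>x\<in>K. \<forall>y\<in>K. \<forall>w\<in>K. j (j x y) w = j x (j y w) \<and> m (m x y) w = m x (m y w)) \<and>
     (\<forall>x\<in>K. \<forall>y\<in>K. j x (m x y) = x \<and> m x (j x y) = x) \<and>
     (\<forall>x\<in>K. \<forall>y\<in>K. \<forall>w\<in>K. m x (j y w) = j (m x y) (m x w)) \<and>
     (\<forall>x\<in>K. j x z = x \<and> m x t = x \<and> j x (c x) = t \<and> m x (c x) = z) \<and>
     \<comment> \<open>Tarski's relation algebra axioms\<close>
     (\<forall>x\<in>K. \<forall>y\<in>K. \<forall>w\<in>K. p (p x y) w = p x (p y w)) \<and>
     (\<forall>x\<in>K. \<forall>y\<in>K. \<forall>w\<in>K. p (j x y) w = j (p x w) (p y w)) \<and>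
     (\<forall>x\<in>K. p x e = x) \<and>
     (\<forall>x\<in>K. v (v x) = x) \<and>
     (\<forall>x\<in>K. \<forall>y\<in>K. v (j x y) = j (v x) (v y)) \<and>
     (\<forall>x\<in>K. \<forall>y\<in>K. v (p x y) = p (v y) (v x)) \<and>
     (\<forall>x\<in>K. \<forall>y\<in>K. j (p (v x) (c (p x y))) (c y) = c y))"

definition ra_le :: "('a, 'b) ra_scheme \<Rightarrow> 'a \<Rightarrow> 'a \<Rightarrow> bool" where
  "ra_le R x y \<longleftrightarrow> ra_join R x y = y"

definition ra_div :: "('a, 'b) ra_scheme \<Rightarrow> 'a" where
  "ra_div R = ra_cmpl R (ra_ident R)"

definition ra_atom :: "('a, 'b) ra_scheme \<Rightarrow> 'a \<Rightarrow> bool" where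
  "ra_atom R x \<longleftrightarrow> x \<in> ra_carrier R \<and> x \<noteq> ra_bot R \<and>
     (\<forall>y\<in>ra_carrier R. ra_le R y x \<longrightarrow> y = ra_bot R \<or> y = x)"

definition ra_div_atom :: "('a, 'b) ra_scheme \<Rightarrow> 'a \<Rightarrow> bool" where
  "ra_div_atom R x \<longleftrightarrow> ra_atom R x \<and> ra_le R x (ra_div R)"

definition ra_integral :: "('a, 'b) ra_scheme \<Rightarrow> bool" where
  "ra_integral R \<longleftrightarrow> ra_atom R (ra_ident R)"

definition ra_symmetric :: "('a, 'b) ra_scheme \<Rightarrow> bool" where
  "ra_symmetric R \<longleftrightarrow> (\<forall>x\<in>ra_carrier R. ra_conv R x = x)"

definition ra_finite :: "('a, 'b) ra_scheme \<Rightarrow> bool" where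
  "ra_finite R \<longleftrightarrow> finite (ra_carrier R)"

definition ra_restr :: "'a ra \<Rightarrow> 'a set \<Rightarrow> 'a ra" where
  "ra_restr A E = A\<lparr>ra_carrier := E\<rparr>"

definition ra_subuniverse :: "'a ra \<Rightarrow> 'a set \<Rightarrow> bool" where
  "ra_subuniverse A E \<longleftrightarrow> E \<subseteq> ra_carrier A \<and>
     ra_bot A \<in> E \<and> ra_top A \<in> E \<and> ra_ident A \<in> E \<and>
     (\<forall>x\<in>E. \<forall>y\<in>E. ra_join A x y \<in> E \<and> ra_meet A x y \<in> E \<and> ra_comp A x y \<in> E) \<and>
     (\<forall>x\<in>E. ra_cmpl A x \<in> E \<and> ra_conv A x \<in> E)"

definition special_extension :: "'a ra \<Rightarrow> 'a set \<Rightarrow> bool" where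
  "special_extension A E \<longleftrightarrow>
    (\<forall>a b c. ra_div_atom (ra_restr A E) a \<and> ra_div_atom (ra_restr A E) b \<and>
             ra_div_atom (ra_restr A E) c \<longrightarrow>
       ((\<not> (a = b \<and> b = c) \<and> ra_le A c (ra_comp A a b)) \<longrightarrow>
          (\<forall>x y. ra_atom A x \<and> ra_atom A y \<and> ra_le A x a \<and> ra_le A y b \<longrightarrow>
                 ra_le A c (ra_comp A x y))) \<and>
       (ra_le A a (ra_comp A a a) \<longrightarrow>
          (\<forall>x y. ra_atom A x \<and> ra_atom A y \<and> ra_le A x a \<and> ra_le A y a \<longrightarrow>
                 ra_meet A (ra_comp A x y) a \<noteq> ra_bot A)))"

text \<open>Atoms of C_E(A): None is the identity atom 1', Some (x, i) is x^(i).\<close>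

type_synonym 'a catom = "('a \<times> nat) option"

definition c_atoms :: "'a ra \<Rightarrow> 'a catom set" where
  "c_atoms A = {None} \<union> {Some (x, i) | x i. ra_div_atom A x}"

definition cE :: "'a ra \<Rightarrow> 'a set \<Rightarrow> 'a \<Rightarrow> 'a" where
  "cE A E x = (SOME e. ra_atom (ra_restr A E) e \<and> ra_le A x e)"

definition Trel :: "nat \<Rightarrow> nat \<Rightarrow> nat \<Rightarrow> bool" where
  "Trel i j k \<longleftrightarrow> (i \<le> j \<and> j = k) \<or> (j \<le> k \<and> k = i) \<or> (k \<le> i \<and> i = j)"

definition c_base :: "'a ra \<Rightarrow> 'a set \<Rightarrow> ('a catom \<times> 'a catom \<times> 'a catom) set" where
  "c_base A E =
     {(None, None, None)} \<union>
     {(None, Some (x, i), Some (x, i)) | x i. ra_div_atom A x} \<union>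
     {(Some (x, i), Some (y, j), Some (z, k)) | x y z i j k.
        ra_div_atom A x \<and> ra_div_atom A y \<and> ra_div_atom A z \<and>
        ra_le A z (ra_comp A x y) \<and>
        (cE A E x = cE A E y \<and> cE A E y = cE A E z \<longrightarrow> Trel i j k)}"

definition c_cycles :: "'a ra \<Rightarrow> 'a set \<Rightarrow> ('a catom \<times> 'a catom \<times> 'a catom) set" where
  "c_cycles A E = {(p, q, r). (p, q, r) \<in> c_base A E \<or> (p, r, q) \<in> c_base A E \<or>
                              (q, p, r) \<in> c_base A E \<or> (q, r, p) \<in> c_base A E \<or>
                              (r, p, q) \<in> c_base A E \<or> (r, q, p) \<in> c_base A E}"

definition CEA :: "'a ra \<Rightarrow> 'a set \<Rightarrow> 'a catom set ra" where
  "CEA A E =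
     \<lparr> ra_carrier = Pow (c_atoms A),
       ra_join = (\<union>),
       ra_meet = (\<inter>),
       ra_cmpl = (\<lambda>X. c_atoms A - X),
       ra_bot = {},
       ra_top = c_atoms A,
       ra_comp = (\<lambda>X Y. {w. \<exists>u\<in>X. \<exists>v\<in>Y. (u, v, w) \<in> c_cycles A E}),
       ra_conv = (\<lambda>X. X),
       ra_ident = {None} \<rparr>"

definition Jset :: "'a ra \<Rightarrow> 'a \<Rightarrow> nat \<Rightarrow> 'a catom set" where
  "Jset A a n = {Some (x, i) | x i. ra_div_atom A x \<and> ra_le A x a \<and> n \<le> i} \<union>
                (if ra_le A (ra_ident A) a then {None} else {})"

end

theory Submission
  imports Defs
begin

(* The atoms of C_E(A) below J(a,0) and J(b,0) are singletons {x^(i)} and {y^(j)} with x <= a and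
   y <= b. Since a and b are distinct atoms of E, x and y lie in different E-classes, so no index
   condition T constrains the cycles through x^(i) and y^(j), and by the cycle law x^(i);y^(j)
   consists of all z^(k) with z <= x;y. For a diversity atom z of A, z <= x;y iff z <= a;b: for
   the nontrivial direction, the E-atom e above z lies below a;b, and the special extension
   property gives e <= x;y. Finally a;b is a diversity element because a.b = 0, so J(a;b,0)
   does not contain 1'. *)

locale tarski_ra =
  fixes R :: "'a ra"
  assumes relation_algebra: "relation_algebra R"
begin

abbreviation "K \<equiv> ra_carrier R"
abbreviation rjoin (infixl "\<squnion>" 65) where "x \<squnion> y \<equiv> ra_join R x y"
abbreviation rmeet (infixl "\<sqinter>" 70) where "x \<sqinter> y \<equiv> ra_meet R x y"
abbreviation rcmpl ("\<sim>_" [81] 80) where "\<sim>x \<equiv> ra_cmpl R x"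
abbreviation rzero ("\<zero>") where "\<zero> \<equiv> ra_bot R"
abbreviation rtop ("\<top>") where "\<top> \<equiv> ra_top R"
abbreviation rcomp (infixl "\<odot>" 75) where "x \<odot> y \<equiv> ra_comp R x y"
abbreviation rconv ("_\<^sup>\<smile>" [1000] 1000) where "x\<^sup>\<smile> \<equiv> ra_conv R x"
abbreviation rident ("1''") where "1' \<equiv> ra_ident R"
abbreviation rle (infix "\<sqsubseteq>" 50) where "x \<sqsubseteq> y \<equiv> ra_le R x y"

lemma relation_algebra_unfolded: "\<zero> \<in> K \<and> \<top> \<in> K \<and> 1' \<in> K \<and>
     (\<forall>x\<in>K. \<forall>y\<in>K. x \<squnion> y \<in> K \<and> x \<sqinter> y \<in> K \<and> x \<odot> y \<in> K) \<and>
     (\<forall>x\<in>K. \<sim>x \<in> K \<and> x\<^sup>\<smile> \<in> K) \<and>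
     (\<forall>x\<in>K. \<forall>y\<in>K. x \<squnion> y = y \<squnion> x \<and> x \<sqinter> y = y \<sqinter> x) \<and>
     (\<forall>x\<in>K. \<forall>y\<in>K. \<forall>w\<in>K. x \<squnion> y \<squnion> w = x \<squnion> (y \<squnion> w) \<and> x \<sqinter> y \<sqinter> w = x \<sqinter> (y \<sqinter> w)) \<and>
     (\<forall>x\<in>K. \<forall>y\<in>K. x \<squnion> x \<sqinter> y = x \<and> x \<sqinter> (x \<squnion> y) = x) \<and>
     (\<forall>x\<in>K. \<forall>y\<in>K. \<forall>w\<in>K. x \<sqinter> (y \<squnion> w) = x \<sqinter> y \<squnion> x \<sqinter> w) \<and>
     (\<forall>x\<in>K. x \<squnion> \<zero> = x \<and> x \<sqinter> \<top> = x \<and> x \<squnion> \<sim>x = \<top> \<and> x \<sqinter> \<sim>x = \<zero>) \<and>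
     (\<forall>x\<in>K. \<forall>y\<in>K. \<forall>w\<in>K. x \<odot> y \<odot> w = x \<odot> (y \<odot> w)) \<and>
     (\<forall>x\<in>K. \<forall>y\<in>K. \<forall>w\<in>K. (x \<squnion> y) \<odot> w = x \<odot> w \<squnion> y \<odot> w) \<and>
     (\<forall>x\<in>K. x \<odot> 1' = x) \<and>
     (\<forall>x\<in>K. x\<^sup>\<smile>\<^sup>\<smile> = x) \<and>
     (\<forall>x\<in>K. \<forall>y\<in>K. (x \<squnion> y)\<^sup>\<smile> = x\<^sup>\<smile> \<squnion> y\<^sup>\<smile>) \<and>
     (\<forall>x\<in>K. \<forall>y\<in>K. (x \<odot> y)\<^sup>\<smile> = y\<^sup>\<smile> \<odot> x\<^sup>\<smile>) \<and>
     (\<forall>x\<in>K. \<forall>y\<in>K. x\<^sup>\<smile> \<odot> \<sim>(x \<odot> y) \<squnion> \<sim>y = \<sim>y)"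
  using relation_algebra unfolding relation_algebra_def Let_def by blast

lemma zero_closed: "\<zero> \<in> K" and top_closed: "\<top> \<in> K" and ident_closed: "1' \<in> K"
  using relation_algebra_unfolded by auto

lemma meet_closed: "x \<in> K \<Longrightarrow> y \<in> K \<Longrightarrow> x \<sqinter> y \<in> K"
  and comp_closed: "x \<in> K \<Longrightarrow> y \<in> K \<Longrightarrow> x \<odot> y \<in> K"
  and cmpl_closed: "x \<in> K \<Longrightarrow> \<sim>x \<in> K"
  and join_commute: "x \<in> K \<Longrightarrow> y \<in> K \<Longrightarrow> x \<squnion> y = y \<squnion> x"
  and meet_commute: "x \<in> K \<Longrightarrow> y \<in> K \<Longrightarrow> x \<sqinter> y = y \<sqinter> x"
  and join_assoc: "x \<in> K \<Longrightarrow> y \<in> K \<Longrightarrow> w \<in> K \<Longrightarrow> x \<squnion> y \<squnion> w = x \<squnion> (y \<squnion> w)"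
  and meet_assoc: "x \<in> K \<Longrightarrow> y \<in> K \<Longrightarrow> w \<in> K \<Longrightarrow> x \<sqinter> y \<sqinter> w = x \<sqinter> (y \<sqinter> w)"
  and join_meet_absorb: "x \<in> K \<Longrightarrow> y \<in> K \<Longrightarrow> x \<squnion> x \<sqinter> y = x"
  and meet_join_absorb: "x \<in> K \<Longrightarrow> y \<in> K \<Longrightarrow> x \<sqinter> (x \<squnion> y) = x"
  and meet_join_distrib: "x \<in> K \<Longrightarrow> y \<in> K \<Longrightarrow> w \<in> K \<Longrightarrow> x \<sqinter> (y \<squnion> w) = x \<sqinter> y \<squnion> x \<sqinter> w"
  and join_zero: "x \<in> K \<Longrightarrow> x \<squnion> \<zero> = x"
  and meet_top: "x \<in> K \<Longrightarrow> x \<sqinter> \<top> = x"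
  and join_cmpl: "x \<in> K \<Longrightarrow> x \<squnion> \<sim>x = \<top>"
  and meet_cmpl: "x \<in> K \<Longrightarrow> x \<sqinter> \<sim>x = \<zero>"
  and comp_join_distrib: "x \<in> K \<Longrightarrow> y \<in> K \<Longrightarrow> w \<in> K \<Longrightarrow> (x \<squnion> y) \<odot> w = x \<odot> w \<squnion> y \<odot> w"
  and comp_ident: "x \<in> K \<Longrightarrow> x \<odot> 1' = x"
  and conv_comp: "x \<in> K \<Longrightarrow> y \<in> K \<Longrightarrow> (x \<odot> y)\<^sup>\<smile> = y\<^sup>\<smile> \<odot> x\<^sup>\<smile>"
  and tarski_axiom: "x \<in> K \<Longrightarrow> y \<in> K \<Longrightarrow> x\<^sup>\<smile> \<odot> \<sim>(x \<odot> y) \<squnion> \<sim>y = \<sim>y"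
  using relation_algebra_unfolded by auto

lemma meet_idem: "x \<in> K \<Longrightarrow> x \<sqinter> x = x"
  by (metis meet_join_absorb join_zero zero_closed)

lemma join_idem: "x \<in> K \<Longrightarrow> x \<squnion> x = x"
  by (metis join_meet_absorb meet_idem)

lemma le_iff_meet: "x \<in> K \<Longrightarrow> y \<in> K \<Longrightarrow> x \<sqsubseteq> y \<longleftrightarrow> x \<sqinter> y = x"
  unfolding ra_le_def by (metis join_meet_absorb meet_join_absorb join_commute meet_commute)

lemma le_refl: "x \<in> K \<Longrightarrow> x \<sqsubseteq> x"
  unfolding ra_le_def by (rule join_idem)

lemma le_trans: "x \<in> K \<Longrightarrow> y \<in> K \<Longrightarrow> w \<in> K \<Longrightarrow> x \<sqsubseteq> y \<Longrightarrow> y \<sqsubseteq> w \<Longrightarrow> x \<sqsubseteq> w"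
  unfolding ra_le_def by (metis join_assoc)

lemma le_antisym: "x \<in> K \<Longrightarrow> y \<in> K \<Longrightarrow> x \<sqsubseteq> y \<Longrightarrow> y \<sqsubseteq> x \<Longrightarrow> x = y"
  unfolding ra_le_def by (metis join_commute)

lemma meet_le1: "x \<in> K \<Longrightarrow> y \<in> K \<Longrightarrow> x \<sqinter> y \<sqsubseteq> x"
  by (metis le_iff_meet meet_closed meet_assoc meet_commute meet_idem)

lemma meet_le2: "x \<in> K \<Longrightarrow> y \<in> K \<Longrightarrow> x \<sqinter> y \<sqsubseteq> y"
  by (metis meet_le1 meet_commute)

lemma le_meetI: "t \<in> K \<Longrightarrow> x \<in> K \<Longrightarrow> y \<in> K \<Longrightarrow> t \<sqsubseteq> x \<Longrightarrow> t \<sqsubseteq> y \<Longrightarrow> t \<sqsubseteq> x \<sqinter> y"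
  by (metis le_iff_meet meet_closed meet_assoc)

lemma le_zero_iff: "x \<in> K \<Longrightarrow> x \<sqsubseteq> \<zero> \<longleftrightarrow> x = \<zero>"
  unfolding ra_le_def by (simp add: join_zero)

lemma le_top: "x \<in> K \<Longrightarrow> x \<sqsubseteq> \<top>"
  by (metis le_iff_meet meet_top top_closed)

lemma le_cmpl_if_meet_zero:
  assumes "x \<in> K" "t \<in> K" "x \<sqinter> t = \<zero>"
  shows "x \<sqsubseteq> \<sim>t"
proof -
  have "x = x \<sqinter> (t \<squnion> \<sim>t)" using assms by (simp add: join_cmpl meet_top)
  also have "\<dots> = x \<sqinter> \<sim>t"
    using assms by (metis meet_join_distrib cmpl_closed join_zero join_commute zero_closed meet_closed)
  finally show ?thesis using assms by (metis le_iff_meet cmpl_closed)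
qed

lemma le_and_le_cmpl: "x \<in> K \<Longrightarrow> t \<in> K \<Longrightarrow> x \<sqsubseteq> t \<Longrightarrow> x \<sqsubseteq> \<sim>t \<Longrightarrow> x = \<zero>"
  using le_meetI[of x t "\<sim>t"] by (simp add: cmpl_closed meet_cmpl le_zero_iff)

lemma comp_mono_left: "x \<in> K \<Longrightarrow> y \<in> K \<Longrightarrow> w \<in> K \<Longrightarrow> x \<sqsubseteq> y \<Longrightarrow> x \<odot> w \<sqsubseteq> y \<odot> w"
  unfolding ra_le_def by (metis comp_join_distrib)

lemma conv_comp_cmpl_le: "x \<in> K \<Longrightarrow> y \<in> K \<Longrightarrow> x\<^sup>\<smile> \<odot> \<sim>(x \<odot> y) \<sqsubseteq> \<sim>y"
  unfolding ra_le_def by (rule tarski_axiom)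

lemma atom_closed: "ra_atom R z \<Longrightarrow> z \<in> K"
  unfolding ra_atom_def by simp

lemma atom_le_iff_meet: 
  assumes z: "ra_atom R z" and t: "t \<in> K"
  shows "z \<sqsubseteq> t \<longleftrightarrow> t \<sqinter> z \<noteq> \<zero>"
proof
  assume "z \<sqsubseteq> t"
  then show "t \<sqinter> z \<noteq> \<zero>" using z t by (metis le_iff_meet meet_commute ra_atom_def)
next
  assume "t \<sqinter> z \<noteq> \<zero>"
  moreover have "t \<sqinter> z \<sqsubseteq> z" using z t by (simp add: meet_le2 atom_closed)
  ultimately have "t \<sqinter> z = z" using z t meet_closed unfolding ra_atom_def by blast
  then show "z \<sqsubseteq> t" using z t by (metis le_iff_meet meet_commute atom_closed)
qed

lemma atoms_disjoint:
  assumes x: "ra_atom R x" and y: "ra_atom R y" and "x \<noteq> y"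
  shows "x \<sqinter> y = \<zero>"
proof (rule ccontr)
  assume "x \<sqinter> y \<noteq> \<zero>"
  then have "y \<sqsubseteq> x" using atom_le_iff_meet[OF y atom_closed[OF x]] by simp
  then show False using x y \<open>x \<noteq> y\<close> atom_closed unfolding ra_atom_def by blast
qed

lemma finite_has_minimal:
  assumes "finite S" "S \<subseteq> K" "s \<in> S"
  obtains e where "e \<in> S" "\<And>t. t \<in> S \<Longrightarrow> t \<sqsubseteq> e \<Longrightarrow> t = e"
proof -
  define below where "below t = card {r \<in> S. r \<sqsubseteq> t}" for t
  obtain e where e: "e \<in> S" and least: "\<And>t. t \<in> S \<Longrightarrow> below e \<le> below t"
    using ex_has_least_nat[of "\<lambda>t. t \<in> S" s below] assms(3) by blast
  have "t = e" if t: "t \<in> S" "t \<sqsubseteq> e" for t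
  proof (rule ccontr)
    assume "t \<noteq> e"
    then have "\<not> e \<sqsubseteq> t" using t e assms(2) le_antisym by blast
    moreover have "{r \<in> S. r \<sqsubseteq> t} \<subseteq> {r \<in> S. r \<sqsubseteq> e}"
      using t e assms(2) le_trans[of _ t e] by blast
    moreover have "e \<in> {r \<in> S. r \<sqsubseteq> e}" using e assms(2) le_refl by blast
    ultimately have "{r \<in> S. r \<sqsubseteq> t} \<subset> {r \<in> S. r \<sqsubseteq> e}" by blast
    then have "below t < below e" unfolding below_def using assms(1) by (simp add: psubset_card_mono)
    then show False using least[OF t(1)] by simp
  qed
  then show ?thesis using e that by blast
qed

end

locale symmetric_ra = tarski_ra +
  assumes symmetric: "ra_symmetric R"
begin

lemma conv_id: "x \<in> K \<Longrightarrow> x\<^sup>\<smile> = x"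
  using symmetric unfolding ra_symmetric_def by auto

lemma comp_commute: "x \<in> K \<Longrightarrow> y \<in> K \<Longrightarrow> x \<odot> y = y \<odot> x"
  by (metis conv_id conv_comp comp_closed)

lemma comp_mono:
  "x \<in> K \<Longrightarrow> y \<in> K \<Longrightarrow> x' \<in> K \<Longrightarrow> y' \<in> K \<Longrightarrow> x \<sqsubseteq> x' \<Longrightarrow> y \<sqsubseteq> y' \<Longrightarrow> x \<odot> y \<sqsubseteq> x' \<odot> y'"
proof -
  assume K: "x \<in> K" "y \<in> K" "x' \<in> K" "y' \<in> K" and le: "x \<sqsubseteq> x'" "y \<sqsubseteq> y'"
  have "x \<odot> y \<sqsubseteq> x' \<odot> y" using K le by (simp add: comp_mono_left)
  moreover have "x' \<odot> y \<sqsubseteq> x' \<odot> y'" using K le comp_mono_left[of y y' x'] by (simp add: comp_commute)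
  ultimately show ?thesis using K le_trans[of "x \<odot> y" "x' \<odot> y" "x' \<odot> y'"] comp_closed by simp
qed

lemma comp_meet_zero_swap:
  assumes K: "x \<in> K" "y \<in> K" "w \<in> K" and zero: "x \<odot> y \<sqinter> w = \<zero>"
  shows "x \<odot> w \<sqinter> y = \<zero>"
proof -
  have "w \<sqsubseteq> \<sim>(x \<odot> y)"
    using K zero le_cmpl_if_meet_zero[of w "x \<odot> y"] by (simp add: meet_commute comp_closed)
  then have "x \<odot> w \<sqsubseteq> x \<odot> \<sim>(x \<odot> y)"
    using K by (simp add: comp_mono le_refl comp_closed cmpl_closed)
  moreover have "x \<odot> \<sim>(x \<odot> y) \<sqsubseteq> \<sim>y"
    using K conv_comp_cmpl_le[of x y] by (simp add: conv_id)
  ultimately have "x \<odot> w \<sqsubseteq> \<sim>y"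
    using K le_trans[of "x \<odot> w" "x \<odot> \<sim>(x \<odot> y)" "\<sim>y"] by (simp add: comp_closed cmpl_closed)
  then have "x \<odot> w \<sqinter> y \<sqsubseteq> \<sim>y"
    using K le_trans[of "x \<odot> w \<sqinter> y" "x \<odot> w" "\<sim>y"] meet_le1[of "x \<odot> w" y]
    by (simp add: comp_closed cmpl_closed meet_closed)
  then show ?thesis
    using K le_and_le_cmpl[of "x \<odot> w \<sqinter> y" y] meet_le2[of "x \<odot> w" y] by (simp add: comp_closed meet_closed)
qed

lemma atom_le_comp_swap:
  assumes "ra_atom R y" "ra_atom R z" "x \<in> K" "z \<sqsubseteq> x \<odot> y"
  shows "y \<sqsubseteq> x \<odot> z"
proof -
  have K: "y \<in> K" "z \<in> K" using assms atom_closed by auto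
  have "x \<odot> y \<sqinter> z \<noteq> \<zero>" using assms K atom_le_iff_meet comp_closed by blast
  then have "x \<odot> z \<sqinter> y \<noteq> \<zero>" using assms K comp_meet_zero_swap by blast
  then show ?thesis using assms K atom_le_iff_meet comp_closed by blast
qed

lemma atom_cycle_iff:
  assumes x: "ra_atom R x" and y: "ra_atom R y" and z: "ra_atom R z"
  shows "z \<sqsubseteq> x \<odot> y \<longleftrightarrow> z \<sqsubseteq> y \<odot> x"
    and "z \<sqsubseteq> x \<odot> y \<longleftrightarrow> y \<sqsubseteq> x \<odot> z"
    and "z \<sqsubseteq> x \<odot> y \<longleftrightarrow> y \<sqsubseteq> z \<odot> x"
    and "z \<sqsubseteq> x \<odot> y \<longleftrightarrow> x \<sqsubseteq> y \<odot> z"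
    and "z \<sqsubseteq> x \<odot> y \<longleftrightarrow> x \<sqsubseteq> z \<odot> y"
proof -
  have swap: "r \<sqsubseteq> p \<odot> q \<longleftrightarrow> q \<sqsubseteq> p \<odot> r"
    if "ra_atom R q" "ra_atom R r" "p \<in> K" for p q r
    using that atom_le_comp_swap by blast
  have commute: "p \<odot> q = q \<odot> p" if "ra_atom R p" "ra_atom R q" for p q
    using that by (simp add: comp_commute atom_closed)
  show 1: "z \<sqsubseteq> x \<odot> y \<longleftrightarrow> z \<sqsubseteq> y \<odot> x" using commute[OF x y] by simp
  show 2: "z \<sqsubseteq> x \<odot> y \<longleftrightarrow> y \<sqsubseteq> x \<odot> z" using swap[OF y z atom_closed[OF x]] .
  show "z \<sqsubseteq> x \<odot> y \<longleftrightarrow> y \<sqsubseteq> z \<odot> x" using 2 commute[OF x z] by simp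
  show 4: "z \<sqsubseteq> x \<odot> y \<longleftrightarrow> x \<sqsubseteq> y \<odot> z" using 1 swap[OF x z atom_closed[OF y]] by simp
  show "z \<sqsubseteq> x \<odot> y \<longleftrightarrow> x \<sqsubseteq> z \<odot> y" using 4 commute[OF y z] by simp
qed

lemma disjoint_comp_le_div:
  assumes "x \<in> K" "y \<in> K" "x \<sqinter> y = \<zero>"
  shows "x \<odot> y \<sqsubseteq> ra_div R"
proof -
  have "y \<sqsubseteq> \<sim>x" using assms le_cmpl_if_meet_zero[of y x] by (simp add: meet_commute)
  then have "x \<odot> y \<sqsubseteq> x \<odot> \<sim>x"
    using assms by (simp add: comp_mono le_refl cmpl_closed)
  moreover have "x \<odot> \<sim>x \<sqsubseteq> \<sim>1'"
    using assms conv_comp_cmpl_le[of x "1'"] by (simp add: ident_closed comp_ident conv_id)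
  ultimately show ?thesis
    unfolding ra_div_def using assms le_trans[of "x \<odot> y" "x \<odot> \<sim>x" "\<sim>1'"]
    by (simp add: comp_closed cmpl_closed ident_closed)
qed

lemma ident_not_le_disjoint_comp:
  assumes "x \<in> K" "y \<in> K" "x \<sqinter> y = \<zero>" "1' \<noteq> \<zero>"
  shows "\<not> 1' \<sqsubseteq> x \<odot> y"
  using assms disjoint_comp_le_div[of x y] le_trans[of "1'" "x \<odot> y" "\<sim>1'"] le_and_le_cmpl le_refl
  unfolding ra_div_def by (meson comp_closed cmpl_closed ident_closed)

end

lemma ra_restr_simps [simp]:
  "ra_carrier (ra_restr A E) = E" "ra_join (ra_restr A E) = ra_join A"
  "ra_meet (ra_restr A E) = ra_meet A" "ra_cmpl (ra_restr A E) = ra_cmpl A"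
  "ra_bot (ra_restr A E) = ra_bot A" "ra_top (ra_restr A E) = ra_top A"
  "ra_comp (ra_restr A E) = ra_comp A" "ra_conv (ra_restr A E) = ra_conv A"
  "ra_ident (ra_restr A E) = ra_ident A"
  "ra_le (ra_restr A E) = ra_le A" "ra_div (ra_restr A E) = ra_div A"
  unfolding ra_restr_def ra_le_def[abs_def] ra_div_def by simp_all

locale ra_subalgebra = tarski_ra +
  fixes E :: "'a set"
  assumes subuniverse: "ra_subuniverse R E"
    and subalgebra: "relation_algebra (ra_restr R E)"
begin

lemma sub_carrier: "E \<subseteq> K"
  and sub_top: "\<top> \<in> E" and sub_ident: "1' \<in> E"
  and sub_meet: "x \<in> E \<Longrightarrow> y \<in> E \<Longrightarrow> x \<sqinter> y \<in> E"
  and sub_comp: "x \<in> E \<Longrightarrow> y \<in> E \<Longrightarrow> x \<odot> y \<in> E"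
  and sub_cmpl: "x \<in> E \<Longrightarrow> \<sim>x \<in> E"
  using subuniverse unfolding ra_subuniverse_def by auto

lemma sub_atom_iff:
  "ra_atom (ra_restr R E) e \<longleftrightarrow> e \<in> E \<and> e \<noteq> \<zero> \<and> (\<forall>t\<in>E. t \<sqsubseteq> e \<longrightarrow> t = \<zero> \<or> t = e)"
  unfolding ra_atom_def by simp

lemma sub_atom_closed: "ra_atom (ra_restr R E) e \<Longrightarrow> e \<in> K"
  using sub_atom_iff sub_carrier by blast

lemma sub_atoms_disjoint:
  "ra_atom (ra_restr R E) e \<Longrightarrow> ra_atom (ra_restr R E) e' \<Longrightarrow> e \<noteq> e' \<Longrightarrow> e \<sqinter> e' = \<zero>"
  using tarski_ra.atoms_disjoint[OF tarski_ra.intro[OF subalgebra]] by simp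

lemma sub_atom_le_iff_meet:
  "ra_atom (ra_restr R E) e \<Longrightarrow> t \<in> E \<Longrightarrow> e \<sqsubseteq> t \<longleftrightarrow> t \<sqinter> e \<noteq> \<zero>"
  using tarski_ra.atom_le_iff_meet[OF tarski_ra.intro[OF subalgebra]] by simp

lemma exists_sub_atom_above:
  assumes "finite E" and z: "ra_atom R z"
  obtains e where "ra_atom (ra_restr R E) e" "z \<sqsubseteq> e"
proof -
  define S where "S = {t \<in> E. z \<sqsubseteq> t}"
  have zK: "z \<in> K" "z \<noteq> \<zero>" using z unfolding ra_atom_def by auto
  have "finite S" "S \<subseteq> K" using assms(1) sub_carrier unfolding S_def by auto
  moreover have "\<top> \<in> S" using zK sub_top le_top unfolding S_def by simp
  ultimately obtain e where e: "e \<in> S" and minimal: "\<And>t. t \<in> S \<Longrightarrow> t \<sqsubseteq> e \<Longrightarrow> t = e"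
    by (rule finite_has_minimal) auto
  have eE: "e \<in> E" "e \<in> K" "z \<sqsubseteq> e" using e sub_carrier unfolding S_def by auto
  have "ra_atom (ra_restr R E) e"
    unfolding sub_atom_iff
  proof (intro conjI ballI impI)
    show "e \<in> E" using eE by simp
    show "e \<noteq> \<zero>" using eE zK le_zero_iff[of z] by auto
    fix t assume t: "t \<in> E" "t \<sqsubseteq> e"
    then have tK: "t \<in> K" using sub_carrier by auto
    show "t = \<zero> \<or> t = e"
    proof (cases "z \<sqsubseteq> t")
      case True
      then show ?thesis using minimal t unfolding S_def by blast
    next
      case False
      then have "z \<sqinter> t = \<zero>" using z zK tK atom_le_iff_meet[of z t] by (simp add: meet_commute)
      then have "z \<sqsubseteq> \<sim>t" using zK tK le_cmpl_if_meet_zero by blast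
      then have "e \<sqinter> \<sim>t \<in> S"
        unfolding S_def using eE zK tK t by (simp add: le_meetI cmpl_closed sub_meet sub_cmpl)
      then have "e \<sqinter> \<sim>t = e"
        using minimal[of "e \<sqinter> \<sim>t"] meet_le1[of e "\<sim>t"] eE tK cmpl_closed by blast
      then have "e \<sqsubseteq> \<sim>t" using eE tK le_iff_meet[of e "\<sim>t"] cmpl_closed by blast
      then have "t \<sqsubseteq> \<sim>t" using t eE tK le_trans[of t e "\<sim>t"] cmpl_closed by blast
      then show ?thesis using tK le_and_le_cmpl[of t t] le_refl by blast
    qed
  qed
  then show ?thesis using that eE by blast
qed

lemma exists_sub_div_atom_above:
  assumes "finite E" "ra_integral R" and z: "ra_div_atom R z"
  obtains e where "ra_div_atom (ra_restr R E) e" "z \<sqsubseteq> e"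
proof -
  have zat: "ra_atom R z" "z \<sqsubseteq> \<sim>1'" using z unfolding ra_div_atom_def ra_div_def by auto
  have zK: "z \<in> K" "z \<noteq> \<zero>" using zat unfolding ra_atom_def by auto
  obtain e where e: "ra_atom (ra_restr R E) e" "z \<sqsubseteq> e"
    using exists_sub_atom_above[OF assms(1) zat(1)] by blast
  have eK: "e \<in> E" "e \<in> K" using e sub_atom_iff sub_carrier by auto
  have "e \<sqinter> 1' = \<zero> \<or> e \<sqinter> 1' = e"
    using e sub_meet[OF eK(1) sub_ident] meet_le1[OF eK(2) ident_closed] unfolding sub_atom_iff by blast
  then have "e \<sqsubseteq> \<sim>1'"
  proof
    assume "e \<sqinter> 1' = \<zero>"
    then show ?thesis using eK le_cmpl_if_meet_zero[of e "1'"] ident_closed by blast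
  next
    assume "e \<sqinter> 1' = e"
    then have "e \<sqsubseteq> 1'" using eK le_iff_meet[of e "1'"] ident_closed by blast
    moreover have "e \<noteq> \<zero>" using e unfolding sub_atom_iff by blast
    moreover have "\<forall>t\<in>K. t \<sqsubseteq> 1' \<longrightarrow> t = \<zero> \<or> t = 1'"
      using assms(2) unfolding ra_integral_def ra_atom_def by simp
    ultimately have "e = 1'" using eK(2) by blast
    then have "z = \<zero>" using e zat zK le_and_le_cmpl[of z "1'"] ident_closed by blast
    then show ?thesis using zK by simp
  qed
  then have "ra_div_atom (ra_restr R E) e" using e(1) unfolding ra_div_atom_def ra_div_def by simp
  then show ?thesis using that e(2) by blast
qed

lemma cE_eq:
  assumes e: "ra_atom (ra_restr R E) e" and z: "z \<in> K" "z \<noteq> \<zero>" "z \<sqsubseteq> e"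
  shows "cE R E z = e"
  unfolding cE_def
proof (rule some_equality)
  show "ra_atom (ra_restr R E) e \<and> z \<sqsubseteq> e" using e z by simp
next
  fix e' assume e': "ra_atom (ra_restr R E) e' \<and> z \<sqsubseteq> e'"
  show "e' = e"
  proof (rule ccontr)
    assume "e' \<noteq> e"
    then have "e' \<sqinter> e = \<zero>" using e e' sub_atoms_disjoint by blast
    moreover have "z \<sqsubseteq> e' \<sqinter> e" using e e' z le_meetI sub_atom_closed by blast
    ultimately show False using z le_zero_iff by simp
  qed
qed

end

lemma CEA_le_iff: "ra_le (CEA A E) u w \<longleftrightarrow> u \<subseteq> w"
  unfolding ra_le_def CEA_def by auto

lemma CEA_comp_singletons: "ra_comp (CEA A E) {p} {q} = {w. (p, q, w) \<in> c_cycles A E}"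
  unfolding CEA_def by simp

lemma CEA_div: "ra_div (CEA A E) = c_atoms A - {None}"
  unfolding ra_div_def CEA_def by simp

lemma CEA_div_atom_singleton:
  assumes "ra_div_atom (CEA A E) u"
  obtains x i where "u = {Some (x, i)}" "ra_div_atom A x"
proof -
  have u: "u \<subseteq> c_atoms A - {None}" "u \<noteq> {}"
    and minimal: "\<And>w. w \<subseteq> c_atoms A \<Longrightarrow> w \<subseteq> u \<Longrightarrow> w = {} \<or> w = u"
    using assms unfolding ra_div_atom_def ra_atom_def CEA_le_iff CEA_div by (auto simp: CEA_def)
  obtain w where w: "w \<in> u" using u by auto
  then have "u = {w}" using u minimal[of "{w}"] by blast
  moreover obtain x i where "w = Some (x, i)" "ra_div_atom A x"
    using u w unfolding c_atoms_def by auto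
  ultimately show ?thesis using that by blast
qed

lemma Jset_zero_if_not_ident:
  "\<not> ra_le A (ra_ident A) c \<Longrightarrow>
   Jset A c 0 = {Some (z, k) | z k. ra_div_atom A z \<and> ra_le A z c}"
  unfolding Jset_def by auto

lemma Jset_div_zero:
  "\<not> ra_le A (ra_ident A) (ra_div A) \<Longrightarrow> Jset A (ra_div A) 0 = ra_div (CEA A E)"
  unfolding Jset_zero_if_not_ident CEA_div c_atoms_def ra_div_atom_def by auto

lemma (in symmetric_ra) c_cycles_of_distinct_classes:
  assumes x: "ra_div_atom R x" and y: "ra_div_atom R y"
    and "cE R E x \<noteq> cE R E y"
  shows "(Some (x, i), Some (y, j), w) \<in> c_cycles R E \<longleftrightarrow>
         (\<exists>z k. w = Some (z, k) \<and> ra_div_atom R z \<and> z \<sqsubseteq> x \<odot> y)"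
proof (cases w)
  case None
  then show ?thesis using assms(3) by (auto simp: c_cycles_def c_base_def)
next
  case (Some p)
  obtain z k where w: "w = Some (z, k)" using Some by (cases p) auto
  have atoms: "ra_atom R x" "ra_atom R y" using x y unfolding ra_div_atom_def by auto
  show ?thesis
  proof
    assume "(Some (x, i), Some (y, j), w) \<in> c_cycles R E"
    then have "ra_div_atom R z \<and> (z \<sqsubseteq> x \<odot> y \<or> z \<sqsubseteq> y \<odot> x \<or> y \<sqsubseteq> x \<odot> z \<or>
        y \<sqsubseteq> z \<odot> x \<or> x \<sqsubseteq> y \<odot> z \<or> x \<sqsubseteq> z \<odot> y)"
      by (simp add: c_cycles_def c_base_def w) (elim disjE; simp)
    moreover have "ra_div_atom R z \<Longrightarrow> ra_atom R z" unfolding ra_div_atom_def by simp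
    ultimately show "\<exists>z k. w = Some (z, k) \<and> ra_div_atom R z \<and> z \<sqsubseteq> x \<odot> y"
      using atom_cycle_iff[OF atoms] w by blast
  next
    assume "\<exists>z k. w = Some (z, k) \<and> ra_div_atom R z \<and> z \<sqsubseteq> x \<odot> y"
    then have "ra_div_atom R z" "z \<sqsubseteq> x \<odot> y" using w by auto
    then show "(Some (x, i), Some (y, j), w) \<in> c_cycles R E"
      using x y assms(3) by (simp add: c_cycles_def c_base_def w)
  qed
qed

locale symmetric_ra_subalgebra = symmetric_ra + ra_subalgebra

lemma (in symmetric_ra_subalgebra) special_extension_comp_of_atoms:
  assumes "finite E" "ra_integral R" "special_extension R E"
    and a: "ra_div_atom (ra_restr R E) a" and b: "ra_div_atom (ra_restr R E) b" and "a \<noteq> b"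
    and x: "ra_atom R x" "x \<sqsubseteq> a" and y: "ra_atom R y" "y \<sqsubseteq> b"
    and z: "ra_div_atom R z"
  shows "z \<sqsubseteq> x \<odot> y \<longleftrightarrow> z \<sqsubseteq> a \<odot> b"
proof -
  have aK: "a \<in> E" "a \<in> K" and bK: "b \<in> E" "b \<in> K"
    using a b sub_carrier unfolding ra_div_atom_def sub_atom_iff by auto
  have xyK: "x \<in> K" "y \<in> K" using x y atom_closed by auto
  have zK: "z \<in> K" "z \<noteq> \<zero>" using z unfolding ra_div_atom_def ra_atom_def by auto
  have "x \<odot> y \<sqsubseteq> a \<odot> b" using x y aK bK xyK comp_mono by blast
  moreover have "z \<sqsubseteq> x \<odot> y" if zab: "z \<sqsubseteq> a \<odot> b"
  proof -
    obtain e where e: "ra_div_atom (ra_restr R E) e" "z \<sqsubseteq> e"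
      using exists_sub_div_atom_above[OF assms(1,2) z] by blast
    have e_atom: "ra_atom (ra_restr R E) e" using e(1) unfolding ra_div_atom_def by simp
    have "z \<sqsubseteq> a \<odot> b \<sqinter> e"
      using zab e(2) zK aK bK sub_atom_closed[OF e_atom] le_meetI comp_closed by blast
    then have "a \<odot> b \<sqinter> e \<noteq> \<zero>" using zK le_zero_iff by auto
    then have "e \<sqsubseteq> a \<odot> b" using sub_atom_le_iff_meet[OF e_atom] sub_comp aK bK by blast
    then have "\<forall>x y. ra_atom R x \<and> ra_atom R y \<and> x \<sqsubseteq> a \<and> y \<sqsubseteq> b \<longrightarrow> e \<sqsubseteq> x \<odot> y"
      using assms(3) a b e(1) \<open>a \<noteq> b\<close> unfolding special_extension_def by blast
    then have "e \<sqsubseteq> x \<odot> y" using x y by blast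
    then show ?thesis
      using e(2) le_trans[of z e "x \<odot> y"] zK xyK sub_atom_closed[OF e_atom] comp_closed by blast
  qed
  ultimately show ?thesis
    using le_trans[of z "x \<odot> y" "a \<odot> b"] zK xyK aK bK comp_closed by blast
qed

theorem lemma3:
  fixes A :: "'a ra" and E :: "'a set" and a b :: 'a and u v :: "'a catom set"
  assumes "relation_algebra A" and "ra_finite A" and "ra_symmetric A" and "ra_integral A"
    and "ra_subuniverse A E"
    and "relation_algebra (ra_restr A E)" and "ra_finite (ra_restr A E)"
    and "ra_symmetric (ra_restr A E)" and "ra_integral (ra_restr A E)"
    and "special_extension A E"
    and "ra_div_atom (ra_restr A E) a" and "ra_div_atom (ra_restr A E) b" and "a \<noteq> b"
    and "ra_div_atom (CEA A E) u" and "ra_div_atom (CEA A E) v"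
    and "ra_le (CEA A E) u (Jset A a 0)" and "ra_le (CEA A E) v (Jset A b 0)"
  shows "ra_comp (CEA A E) u v = Jset A (ra_comp A a b) 0 \<and>
         (ra_comp A a b = ra_div A \<longrightarrow> ra_comp (CEA A E) u v = ra_div (CEA A E))"
proof -
  interpret symmetric_ra_subalgebra A E using assms(1,3,5,6) by unfold_locales
  have finite_E: "finite E" using assms(7) unfolding ra_finite_def by simp
  obtain x i where u: "u = {Some (x, i)}" and x: "ra_div_atom A x"
    using CEA_div_atom_singleton[OF assms(14)] .
  obtain y j where v: "v = {Some (y, j)}" and y: "ra_div_atom A y"
    using CEA_div_atom_singleton[OF assms(15)] .
  have xa: "ra_le A x a" and yb: "ra_le A y b"
    using assms(16,17) unfolding u v CEA_le_iff Jset_def by (auto split: if_splits)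
  have a_atom: "ra_atom (ra_restr A E) a" and b_atom: "ra_atom (ra_restr A E) b"
    using assms(11,12) unfolding ra_div_atom_def by auto
  have x_atom: "ra_atom A x" and y_atom: "ra_atom A y"
    using x y unfolding ra_div_atom_def by auto
  have ab_disjoint: "ra_meet A a b = ra_bot A"
    using sub_atoms_disjoint[OF a_atom b_atom assms(13)] .
  have no_ident: "\<not> ra_le A (ra_ident A) (ra_comp A a b)"
    using ident_not_le_disjoint_comp[OF sub_atom_closed[OF a_atom] sub_atom_closed[OF b_atom] ab_disjoint]
      assms(4) unfolding ra_integral_def ra_atom_def by blast
  have "cE A E x = a" "cE A E y = b"
    using cE_eq a_atom b_atom x_atom y_atom xa yb unfolding ra_atom_def by auto
  then have comp_uv: "ra_comp (CEA A E) u v = Jset A (ra_comp A a b) 0"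
    unfolding u v CEA_comp_singletons Jset_zero_if_not_ident[OF no_ident]
    using c_cycles_of_distinct_classes[where E = E, OF x y] assms(13)
      special_extension_comp_of_atoms[OF finite_E assms(4,10,11,12,13) x_atom xa y_atom yb]
    by auto
  then show ?thesis using no_ident Jset_div_zero by metis
qed

end
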